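(* Let $\mathcal{X}=\{\{\mathbf{x}^{(\mathbf{n},m)}\in\mathbb{R}^D\}_{\mathbf{n}\in[N]^P}\}_{m=1}^M$ and let $\bar{\mathcal{K}}\subseteq[N]^P$ have size divisible by $2^P$. Then there exists a complete undirected weighted graph with vertex set $\bar{\mathcal{K}}$ and edge weights $w$ such that for every partition of $\bar{\mathcal{K}}$ into $2^P$ equally sized disjoint sets $\{\mathcal{K}_{\mathbf{k}}\}_{\mathbf{k}\in[2]^P}$, the weight of the induced $2^P$-cut, $\frac12\sum_{\mathbf{k}\in[2]^P}\sum_{\mathbf{n}\in\mathcal{K}_{\mathbf{k}},\,\mathbf{n}'\in\bar{\mathcal{K}}\setminus\mathcal{K}_{\mathbf{k}}}w(\{\mathbf{n},\mathbf{n}'\})$, is equal, up to multiplicative and additive constants independent of the partition, to $\frac1{2^P}\sum_{\mathbf{k}\in[2]^P}\mathrm{SE}(\mathcal{X};\mathcal{K}_{\mathbf{k}})$. Consequently, minimizing $\frac1{2^P}\sum_{\mathbf{k}}\mathrm{SE}(\mathcal{X};\mathcal{K}_{\mathbf{k}})$ over such balanced partitions is a minimum balanced $2^P$-cut problem over a complete graph with $|\bar{\mathcal{K}}|$ vertices.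
   Context: For the instance set $\mathcal{X}$ and features $\mathbf{n},\mathbf{n}'\in[N]^P$, let $\mu^{(\mathbf{n})}=\frac1M\sum_m\mathbf{x}^{(\mathbf{n},m)}$, $\Sigma^{(\mathbf{n})}=\frac1M\sum_m(\mathbf{x}^{(\mathbf{n},m)}-\mu^{(\mathbf{n})})\otimes(\mathbf{x}^{(\mathbf{n},m)}-\mu^{(\mathbf{n})})$, $\Sigma^{(\mathbf{n},\mathbf{n}')}=\frac1M\sum_m(\mathbf{x}^{(\mathbf{n},m)}-\mu^{(\mathbf{n})})\otimes(\mathbf{x}^{(\mathbf{n}',m)}-\mu^{(\mathbf{n}')})$, and the multivariate Pearson correlation $p_{\mathbf{n},\mathbf{n}'}:=\mathrm{tr}(\Sigma^{(\mathbf{n},\mathbf{n}')})/\mathrm{tr}((\Sigma^{(\mathbf{n})}\Sigma^{(\mathbf{n}')})^{1/2})$. For $\mathcal{K}\subseteq[N]^P$, the surrogate entanglement is $\mathrm{SE}(\mathcal{X};\mathcal{K}):=\sum_{\mathbf{n}\in\mathcal{K},\,\mathbf{n}'\in[N]^P\setminus\mathcal{K}}p_{\mathbf{n},\mathbf{n}'}$. *)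

theory Defs
  imports "HOL-Analysis.Analysis"
begin

text \<open>Features n in [N]^P are functions {..<P} -> {..<N} (extensional, PiE);
  the 2^P part indices k in [2]^P are functions {..<P} -> {..<2}.
  The data x n m is the instance x^(n,m) in R^D (D = CARD('d)), m ranges over {..<M}.\<close>

definition feats :: "nat \<Rightarrow> nat \<Rightarrow> (nat \<Rightarrow> nat) set" where
  "feats N P = PiE {..<P} (\<lambda>_. {..<N})"

definition outer :: "real^'d \<Rightarrow> real^'d \<Rightarrow> real^'d^'d" where
  "outer u v = (\<chi> i j. u $ i * v $ j)"

definition mean_vec :: "nat \<Rightarrow> ('f \<Rightarrow> nat \<Rightarrow> real^'d) \<Rightarrow> 'f \<Rightarrow> real^'d" where
  "mean_vec M x n = (1 / real M) *\<^sub>R (\<Sum>m<M. x n m)"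

definition cross_cov :: "nat \<Rightarrow> ('f \<Rightarrow> nat \<Rightarrow> real^'d) \<Rightarrow> 'f \<Rightarrow> 'f \<Rightarrow> real^'d^'d" where
  "cross_cov M x n n' = (1 / real M) *\<^sub>R
     (\<Sum>m<M. outer (x n m - mean_vec M x n) (x n' m - mean_vec M x n'))"

definition cov :: "nat \<Rightarrow> ('f \<Rightarrow> nat \<Rightarrow> real^'d) \<Rightarrow> 'f \<Rightarrow> real^'d^'d" where
  "cov M x n = cross_cov M x n n"

definition psd :: "real^'d^'d \<Rightarrow> bool" where
  "psd S \<longleftrightarrow> transpose S = S \<and> (\<forall>v. 0 \<le> v \<bullet> (S *v v))"

definition psd_sqrt :: "real^'d^'d \<Rightarrow> real^'d^'d" where
  "psd_sqrt A = (THE S. psd S \<and> S ** S = A)"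

text \<open>tr((A B)^(1/2)) for PSD A, B, via the standard convention
  tr((A B)^(1/2)) = tr((A^(1/2) B A^(1/2))^(1/2)).\<close>
definition tr_sqrt_prod :: "real^'d^'d \<Rightarrow> real^'d^'d \<Rightarrow> real" where
  "tr_sqrt_prod A B = trace (psd_sqrt (psd_sqrt A ** B ** psd_sqrt A))"

definition pearson :: "nat \<Rightarrow> ('f \<Rightarrow> nat \<Rightarrow> real^'d) \<Rightarrow> 'f \<Rightarrow> 'f \<Rightarrow> real" where
  "pearson M x n n' = trace (cross_cov M x n n') / tr_sqrt_prod (cov M x n) (cov M x n')"

definition SE :: "nat \<Rightarrow> nat \<Rightarrow> nat \<Rightarrow> ((nat \<Rightarrow> nat) \<Rightarrow> nat \<Rightarrow> real^'d)
                    \<Rightarrow> (nat \<Rightarrow> nat) set \<Rightarrow> real" where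
  "SE N P M x K = (\<Sum>n\<in>K. \<Sum>n'\<in>feats N P - K. pearson M x n n')"

definition balanced_partition ::
  "nat \<Rightarrow> (nat \<Rightarrow> nat) set \<Rightarrow> ((nat \<Rightarrow> nat) \<Rightarrow> (nat \<Rightarrow> nat) set) \<Rightarrow> bool" where
  "balanced_partition P Kbar Kp \<longleftrightarrow>
     (\<Union>k\<in>feats 2 P. Kp k) = Kbar \<and>
     (\<forall>k\<in>feats 2 P. \<forall>k'\<in>feats 2 P. k \<noteq> k' \<longrightarrow> Kp k \<inter> Kp k' = {}) \<and>
     (\<forall>k\<in>feats 2 P. card (Kp k) = card Kbar div 2 ^ P)"

definition cut_weight ::
  "nat \<Rightarrow> (nat \<Rightarrow> nat) set \<Rightarrow> ((nat \<Rightarrow> nat) set \<Rightarrow> real)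
     \<Rightarrow> ((nat \<Rightarrow> nat) \<Rightarrow> (nat \<Rightarrow> nat) set) \<Rightarrow> real" where
  "cut_weight P Kbar w Kp = (1/2) * (\<Sum>k\<in>feats 2 P. \<Sum>n\<in>Kp k. \<Sum>n'\<in>Kbar - Kp k. w {n, n'})"

end

theory Submission
  imports Defs "HOL-Library.Disjoint_Sets"
begin

text \<open>Write \<open>p\<close> for the Pearson correlation and \<open>F = [N]\<^sup>P\<close>. Splitting \<open>F - K\<^sub>k\<close> into
  \<open>(F - Kbar) \<union> (Kbar - K\<^sub>k)\<close> shows that \<open>\<Sum>\<^sub>k SE(K\<^sub>k)\<close> is a constant (the sum of \<open>p n n'\<close>
  over \<open>n \<in> Kbar\<close>, \<open>n' \<notin> Kbar\<close>) plus the directed cut, the sum of \<open>p n n'\<close> over \<open>n \<in> K\<^sub>k\<close>,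
  \<open>n' \<in> Kbar - K\<^sub>k\<close>. The directed cut is the sum of \<open>p\<close> over all pairs in \<open>Kbar\<close> minus the
  pairs lying in a common part, so it does not change when \<open>p\<close> is transposed. Hence it equals
  the undirected cut for the edge weights \<open>w {n, n'} = p n n' + p n' n\<close>, and the theorem holds
  with \<open>a = 2\<^sup>P\<close>.\<close>

lemma finite_feats: "finite (feats N P)"
  unfolding feats_def by (simp add: finite_PiE)

definition cut_sum :: "'i set \<Rightarrow> ('i \<Rightarrow> 'a set) \<Rightarrow> 'a set \<Rightarrow> ('a \<Rightarrow> 'a \<Rightarrow> 'b::comm_monoid_add) \<Rightarrow> 'b"
  where "cut_sum I K V f = (\<Sum>k\<in>I. \<Sum>n\<in>K k. \<Sum>n'\<in>V - K k. f n n')"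

lemma balanced_partition_partition:
  assumes "balanced_partition P Kbar Kp"
  shows "(\<Union>k\<in>feats 2 P. Kp k) = Kbar" "disjoint_family_on Kp (feats 2 P)"
  using assms unfolding balanced_partition_def disjoint_family_on_def by auto

lemma sum_over_partition:
  assumes "finite V" "finite I" "(\<Union>k\<in>I. K k) = V" "disjoint_family_on K I"
  shows "(\<Sum>k\<in>I. \<Sum>n\<in>K k. g n) = (\<Sum>n\<in>V. g n)"
proof -
  have "\<forall>k\<in>I. finite (K k)"
    using assms(1,3) by (metis UN_upper finite_subset)
  then have "(\<Sum>n\<in>(\<Union>k\<in>I. K k). g n) = (\<Sum>k\<in>I. \<Sum>n\<in>K k. g n)"
    using sum.UNION_disjoint[OF assms(2)] assms(4) unfolding disjoint_family_on_def by blast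
  then show ?thesis
    unfolding assms(3) by (rule sym)
qed

lemma cut_sum_eq_all_pairs_minus_inner:
  fixes f :: "'a \<Rightarrow> 'a \<Rightarrow> 'b::ab_group_add"
  assumes "finite V" "finite I" "(\<Union>k\<in>I. K k) = V" "disjoint_family_on K I"
  shows "cut_sum I K V f = (\<Sum>n\<in>V. \<Sum>n'\<in>V. f n n') - (\<Sum>k\<in>I. \<Sum>n\<in>K k. \<Sum>n'\<in>K k. f n n')"
proof -
  have "cut_sum I K V f = (\<Sum>k\<in>I. \<Sum>n\<in>K k. (\<Sum>n'\<in>V. f n n') - (\<Sum>n'\<in>K k. f n n'))"
    unfolding cut_sum_def
  proof (intro sum.cong refl)
    fix k n assume "k \<in> I"
    then have "K k \<subseteq> V" using assms(3) by blast
    then show "(\<Sum>n'\<in>V - K k. f n n') = (\<Sum>n'\<in>V. f n n') - (\<Sum>n'\<in>K k. f n n')"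
      by (rule sum_diff[OF assms(1)])
  qed
  also have "\<dots> = (\<Sum>n\<in>V. \<Sum>n'\<in>V. f n n') - (\<Sum>k\<in>I. \<Sum>n\<in>K k. \<Sum>n'\<in>K k. f n n')"
    by (simp only: sum_subtractf sum_over_partition[OF assms])
  finally show ?thesis .
qed

lemma cut_sum_transpose:
  fixes f :: "'a \<Rightarrow> 'a \<Rightarrow> 'b::ab_group_add"
  assumes "finite V" "finite I" "(\<Union>k\<in>I. K k) = V" "disjoint_family_on K I"
  shows "cut_sum I K V (\<lambda>n n'. f n' n) = cut_sum I K V f"
  unfolding cut_sum_eq_all_pairs_minus_inner[OF assms]
  by (subst (1 2) sum.swap) simp

lemma sum_outside_parts:
  fixes f :: "'a \<Rightarrow> 'a \<Rightarrow> 'b::comm_monoid_add"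
  assumes "finite U" "V \<subseteq> U" "finite I" "(\<Union>k\<in>I. K k) = V" "disjoint_family_on K I"
  shows "(\<Sum>k\<in>I. \<Sum>n\<in>K k. \<Sum>n'\<in>U - K k. f n n')
       = (\<Sum>n\<in>V. \<Sum>n'\<in>U - V. f n n') + cut_sum I K V f"
proof -
  have fin: "finite V" using finite_subset[OF assms(2,1)] .
  have "(\<Sum>k\<in>I. \<Sum>n\<in>K k. \<Sum>n'\<in>U - K k. f n n')
      = (\<Sum>k\<in>I. \<Sum>n\<in>K k. (\<Sum>n'\<in>U - V. f n n') + (\<Sum>n'\<in>V - K k. f n n'))"
  proof (intro sum.cong refl)
    fix k n assume "k \<in> I"
    then have "U - K k = (U - V) \<union> (V - K k)" "(U - V) \<inter> (V - K k) = {}"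
      using assms(2,4) by blast+
    then show "(\<Sum>n'\<in>U - K k. f n n') = (\<Sum>n'\<in>U - V. f n n') + (\<Sum>n'\<in>V - K k. f n n')"
      using assms(1) fin by (simp add: sum.union_disjoint)
  qed
  then show ?thesis
    by (simp add: sum.distrib cut_sum_def sum_over_partition[OF fin assms(3-5)])
qed

definition symmetrized_weight :: "('a \<Rightarrow> 'a \<Rightarrow> 'b::comm_monoid_add) \<Rightarrow> 'a set \<Rightarrow> 'b"
  where "symmetrized_weight p e = (\<Sum>a\<in>e. \<Sum>b\<in>e - {a}. p a b)"

lemma symmetrized_weight_edge:
  "n \<noteq> n' \<Longrightarrow> symmetrized_weight p {n, n'} = p n n' + p n' n"
  unfolding symmetrized_weight_def by (simp add: insert_Diff_if)

lemma cut_weight_symmetrized: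
  assumes "finite Kbar" "(\<Union>k\<in>feats 2 P. Kp k) = Kbar" "disjoint_family_on Kp (feats 2 P)"
  shows "cut_weight P Kbar (symmetrized_weight p) Kp = cut_sum (feats 2 P) Kp Kbar p"
proof -
  let ?I = "feats 2 P"
  have "cut_weight P Kbar (symmetrized_weight p) Kp
      = (1/2) * cut_sum ?I Kp Kbar (\<lambda>n n'. p n n' + p n' n)"
    unfolding cut_weight_def cut_sum_def
    by (intro arg_cong[where f = "(*) (1/2)"] sum.cong refl)
       (rule symmetrized_weight_edge, blast)
  also have "\<dots> = (1/2) * (cut_sum ?I Kp Kbar p + cut_sum ?I Kp Kbar (\<lambda>n n'. p n' n))"
    by (simp add: cut_sum_def sum.distrib)
  also have "\<dots> = cut_sum ?I Kp Kbar p"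
    using cut_sum_transpose[OF assms(1) finite_feats assms(2,3), of p] by simp
  finally show ?thesis .
qed

theorem proposition5:
  fixes N P M :: nat and x :: "(nat \<Rightarrow> nat) \<Rightarrow> nat \<Rightarrow> real^'d"
    and Kbar :: "(nat \<Rightarrow> nat) set"
  assumes "Kbar \<subseteq> feats N P" and "(2::nat) ^ P dvd card Kbar"
  shows "\<exists>(w :: (nat \<Rightarrow> nat) set \<Rightarrow> real) (a::real) (b::real). a > 0 \<and>
           (\<forall>Kp. balanced_partition P Kbar Kp \<longrightarrow>
              cut_weight P Kbar w Kp
                = a * ((1 / 2 ^ P) * (\<Sum>k\<in>feats 2 P. SE N P M x (Kp k))) + b)"
proof (intro exI conjI allI impI)
  let ?p = "pearson M x"
  let ?C = "\<Sum>n\<in>Kbar. \<Sum>n'\<in>feats N P - Kbar. ?p n n'"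
  show "(2::real) ^ P > 0" by simp
  fix Kp assume "balanced_partition P Kbar Kp"
  note part = balanced_partition_partition[OF this]
  have fin: "finite Kbar" using finite_subset[OF assms(1) finite_feats] .
  have "(\<Sum>k\<in>feats 2 P. SE N P M x (Kp k)) = ?C + cut_sum (feats 2 P) Kp Kbar ?p"
    unfolding SE_def by (rule sum_outside_parts[OF finite_feats assms(1) finite_feats part])
  then show "cut_weight P Kbar (symmetrized_weight ?p) Kp
      = 2 ^ P * ((1 / 2 ^ P) * (\<Sum>k\<in>feats 2 P. SE N P M x (Kp k))) + - ?C"
    by (simp add: cut_weight_symmetrized[OF fin part])
qed

end
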